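(* For any quiver $G$, the explosion $X(G)$ equipped with the covering map $p_G : X(G)\to G$ is the epi-projective cover of $G$; that is, $X(G)$ is epi-projective and $p_G$ is an epi-coessential epimorphism.
   Context: A quiver is a quadruple $(V,E,\sigma,\tau)$ with $V,E$ sets and $\sigma,\tau : E \to V$ functions (source and target). A quiver homomorphism is a pair of functions on vertices and edges commuting with sources and targets; $\mathbf{Quiv}$ is the category of quivers, composition componentwise. A homomorphism is epic iff its vertex and edge maps are surjective. A quiver $P$ is epi-projective if for every epic $\phi : A\to B$ and every $\psi : P\to B$ there is $\gamma : P\to A$ with $\phi\circ\gamma=\psi$. An epic $\phi : G\to H$ is epi-coessential if for every homomorphism $\alpha : A\to G$, $\phi\circ\alpha$ epic implies $\alpha$ epic. An epi-projective cover of $G$ is an epi-projective quiver $P$ with an epi-coessential homomorphism $P\to G$. A vertex $v$ is independent if no edge has $v$ as source or target; $\mathrm{indep}(G)$ is the set of independent vertices. For a set $S$, $I(S)$ is the quiver with vertex set $S$ and no edges; $M(T)$ has vertex set $\{0,1\}\times T$, edge set $T$, source $t\mapsto(0,t)$, target $t\mapsto(1,t)$. The explosion is $X(G):=I(\mathrm{indep}(G))\amalg M(E(G))$ (disjoint union of quivers). The covering map $p_G : X(G)\to G$ is the unique homomorphism which on $I(\mathrm{indep}(G))$ sends each independent vertex $v$ to $v$, and on $M(E(G))$ is the identity on edges and sends $(0,e)\mapsto\sigma_G(e)$, $(1,e)\mapsto\tau_G(e)$. *)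

theory Defs
  imports Main
begin

record ('v, 'e) quiver =
  verts :: "'v set"
  edges :: "'e set"
  src   :: "'e \<Rightarrow> 'v"
  tgt   :: "'e \<Rightarrow> 'v"

definition is_quiver :: "('v, 'e) quiver \<Rightarrow> bool" where
  "is_quiver Q \<longleftrightarrow> (\<forall>e\<in>edges Q. src Q e \<in> verts Q \<and> tgt Q e \<in> verts Q)"

text \<open>A homomorphism is a pair (vertex map, edge map); only values on the carriers matter.\<close>
type_synonym ('v1, 'e1, 'v2, 'e2) qhom = "('v1 \<Rightarrow> 'v2) \<times> ('e1 \<Rightarrow> 'e2)"

definition is_hom :: "('v1, 'e1, 'v2, 'e2) qhom \<Rightarrow> ('v1, 'e1) quiver \<Rightarrow> ('v2, 'e2) quiver \<Rightarrow> bool" where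
  "is_hom f A B \<longleftrightarrow>
     (\<forall>v\<in>verts A. fst f v \<in> verts B) \<and>
     (\<forall>e\<in>edges A. snd f e \<in> edges B \<and>
                    src B (snd f e) = fst f (src A e) \<and>
                    tgt B (snd f e) = fst f (tgt A e))"

definition hcomp :: "('v2, 'e2, 'v3, 'e3) qhom \<Rightarrow> ('v1, 'e1, 'v2, 'e2) qhom \<Rightarrow> ('v1, 'e1, 'v3, 'e3) qhom" where
  "hcomp g f = (fst g \<circ> fst f, snd g \<circ> snd f)"

definition hom_eq :: "('v1, 'e1) quiver \<Rightarrow> ('v1, 'e1, 'v2, 'e2) qhom \<Rightarrow> ('v1, 'e1, 'v2, 'e2) qhom \<Rightarrow> bool" where
  "hom_eq A f g \<longleftrightarrow> (\<forall>v\<in>verts A. fst f v = fst g v) \<and> (\<forall>e\<in>edges A. snd f e = snd g e)"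

definition epic :: "('v1, 'e1, 'v2, 'e2) qhom \<Rightarrow> ('v1, 'e1) quiver \<Rightarrow> ('v2, 'e2) quiver \<Rightarrow> bool" where
  "epic f A B \<longleftrightarrow> is_hom f A B \<and> fst f ` verts A = verts B \<and> snd f ` edges A = edges B"

text \<open>Epi-projectivity of P, tested against all quivers A, B of the (arbitrary) types
  of the type variables; a theorem quantifying over A B with free type variables
  thereby ranges over quivers of every size.\<close>
definition epi_projective_wrt :: "('v, 'e) quiver \<Rightarrow> ('va, 'ea) quiver \<Rightarrow> ('vb, 'eb) quiver \<Rightarrow> bool" where
  "epi_projective_wrt P A B \<longleftrightarrow>
     (\<forall>\<phi> \<psi>. epic \<phi> A B \<and> is_hom \<psi> P B \<longrightarrow>
        (\<exists>\<gamma>. is_hom \<gamma> P A \<and> hom_eq P (hcomp \<phi> \<gamma>) \<psi>))"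

definition epi_coessential_wrt :: "('v1, 'e1, 'v2, 'e2) qhom \<Rightarrow> ('v1, 'e1) quiver \<Rightarrow> ('v2, 'e2) quiver \<Rightarrow> ('va, 'ea) quiver \<Rightarrow> bool" where
  "epi_coessential_wrt \<phi> G H A \<longleftrightarrow>
     epic \<phi> G H \<and>
     (\<forall>\<alpha>. is_hom \<alpha> A G \<and> epic (hcomp \<phi> \<alpha>) A H \<longrightarrow> epic \<alpha> A G)"

definition indep :: "('v, 'e) quiver \<Rightarrow> 'v set" where
  "indep G = {v \<in> verts G. \<forall>e\<in>edges G. src G e \<noteq> v \<and> tgt G e \<noteq> v}"

definition Iq :: "'a set \<Rightarrow> ('a, 'b) quiver" where
  "Iq S = \<lparr>verts = S, edges = {}, src = (\<lambda>_. undefined), tgt = (\<lambda>_. undefined)\<rparr>"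

definition Mq :: "'t set \<Rightarrow> (nat \<times> 't, 't) quiver" where
  "Mq T = \<lparr>verts = {0, 1} \<times> T, edges = T, src = (\<lambda>t. (0, t)), tgt = (\<lambda>t. (1, t))\<rparr>"

definition qunion :: "('v1, 'e1) quiver \<Rightarrow> ('v2, 'e2) quiver \<Rightarrow> ('v1 + 'v2, 'e1 + 'e2) quiver" where
  "qunion A B = \<lparr>verts = Inl ` verts A \<union> Inr ` verts B,
                 edges = Inl ` edges A \<union> Inr ` edges B,
                 src = case_sum (\<lambda>e. Inl (src A e)) (\<lambda>e. Inr (src B e)),
                 tgt = case_sum (\<lambda>e. Inl (tgt A e)) (\<lambda>e. Inr (tgt B e))\<rparr>"

definition explosion :: "('v, 'e) quiver \<Rightarrow> ('v + nat \<times> 'e, 'e + 'e) quiver" where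
  "explosion G = qunion (Iq (indep G)) (Mq (edges G))"

definition cover_map :: "('v, 'e) quiver \<Rightarrow> ('v + nat \<times> 'e, 'e + 'e, 'v, 'e) qhom" where
  "cover_map G =
     (case_sum (\<lambda>v. v) (\<lambda>(i, e). if i = 0 then src G e else tgt G e),
      case_sum (\<lambda>_. undefined) (\<lambda>e. e))"

end

theory Submission
  imports Defs
begin

text \<open>A homomorphism out of the explosion is freely determined by a vertex for each independent
  vertex and an edge for each edge of G, the two endpoints of the match being forced. Hence a
  homomorphism into B lifts along an epimorphism onto B by lifting these generators one at a
  time. Conversely, the covering map is bijective on edges and the only preimage of an
  independent vertex is its copy; so a homomorphism into the explosion whose composite with the
  cover is epic hits every edge and every independent vertex, and thereby also every endpoint
  of an edge.\<close>

lemma verts_explosion: "verts (explosion G) = Inl ` indep G \<union> Inr ` ({0, 1} \<times> edges G)"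
  and edges_explosion: "edges (explosion G) = Inr ` edges G"
  and src_explosion_Inr: "src (explosion G) (Inr e) = Inr (0, e)"
  and tgt_explosion_Inr: "tgt (explosion G) (Inr e) = Inr (1, e)"
  by (auto simp: explosion_def qunion_def Iq_def Mq_def)

lemmas explosion_simps =
  verts_explosion edges_explosion src_explosion_Inr tgt_explosion_Inr

lemma is_quiver_explosion: "is_quiver (explosion G)"
  by (auto simp: is_quiver_def explosion_simps)

lemma indep_explosion: "indep (explosion G) = Inl ` indep G"
  by (force simp: indep_def explosion_simps)

lemma is_hom_hcomp:
  assumes "is_hom g B C" and "is_hom f A B"
  shows "is_hom (hcomp g f) A C"
  using assms by (simp add: is_hom_def hcomp_def)

lemma epic_imp_is_hom: "epic f A B \<Longrightarrow> is_hom f A B"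
  by (simp add: epic_def)

lemma epic_if_hits_edges_and_indep:
  assumes "is_quiver A" and hom: "is_hom f A B"
    and edges_hit: "edges B \<subseteq> snd f ` edges A"
    and indep_hit: "indep B \<subseteq> fst f ` verts A"
  shows "epic f A B"
  unfolding epic_def
proof (intro conjI equalityI subsetI)
  fix v assume v: "v \<in> verts B"
  show "v \<in> fst f ` verts A"
  proof (cases "v \<in> indep B")
    case True
    then show ?thesis using indep_hit by blast
  next
    case False
    then obtain e where "e \<in> edges B" and "v = src B e \<or> v = tgt B e"
      using v by (auto simp: indep_def)
    moreover obtain a where "a \<in> edges A" and "e = snd f a"
      using edges_hit \<open>e \<in> edges B\<close> by blast
    ultimately show ?thesis
      using hom \<open>is_quiver A\<close> by (auto simp: is_hom_def is_quiver_def)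
  qed
qed (use hom edges_hit in \<open>auto simp: is_hom_def\<close>)

lemma is_hom_explosion_iff:
  assumes "is_quiver A"
  shows "is_hom h (explosion G) A \<longleftrightarrow>
    (\<forall>v\<in>indep G. fst h (Inl v) \<in> verts A) \<and>
    (\<forall>e\<in>edges G. snd h (Inr e) \<in> edges A \<and>
                  fst h (Inr (0, e)) = src A (snd h (Inr e)) \<and>
                  fst h (Inr (1, e)) = tgt A (snd h (Inr e)))"
  using assms by (auto simp: is_hom_def is_quiver_def explosion_simps)

lemma hom_eq_explosion_iff:
  assumes "is_hom h (explosion G) B" and "is_hom h' (explosion G) B"
  shows "hom_eq (explosion G) h h' \<longleftrightarrow>
    (\<forall>v\<in>indep G. fst h (Inl v) = fst h' (Inl v)) \<and>
    (\<forall>e\<in>edges G. snd h (Inr e) = snd h' (Inr e))"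
proof -
  have "fst h (Inr (0, e)) = src B (snd h (Inr e))" "fst h (Inr (1, e)) = tgt B (snd h (Inr e))"
    "fst h' (Inr (0, e)) = src B (snd h' (Inr e))" "fst h' (Inr (1, e)) = tgt B (snd h' (Inr e))"
    if "e \<in> edges G" for e
    using assms that by (auto simp: is_hom_def explosion_simps)
  then show ?thesis
    by (auto simp: hom_eq_def explosion_simps)
qed

lemma epi_projective_explosion:
  fixes G :: "('v, 'e) quiver" and A :: "('va, 'ea) quiver" and B :: "('vb, 'eb) quiver"
  assumes "is_quiver A"
  shows "epi_projective_wrt (explosion G) A B"
  unfolding epi_projective_wrt_def
proof (intro allI impI, elim conjE)
  fix \<phi> :: "('va, 'ea, 'vb, 'eb) qhom" and \<psi>
  assume \<phi>: "epic \<phi> A B" and \<psi>: "is_hom \<psi> (explosion G) B"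
  have "\<forall>v\<in>indep G. fst \<psi> (Inl v) \<in> fst \<phi> ` verts A"
    using \<phi> \<psi> by (auto simp: epic_def is_hom_def verts_explosion)
  then obtain lv where lv: "\<And>v. v \<in> indep G \<Longrightarrow> lv v \<in> verts A \<and> fst \<phi> (lv v) = fst \<psi> (Inl v)"
    unfolding image_iff by metis
  have "\<forall>e\<in>edges G. snd \<psi> (Inr e) \<in> snd \<phi> ` edges A"
    using \<phi> \<psi> by (auto simp: epic_def is_hom_def edges_explosion)
  then obtain le where le: "\<And>e. e \<in> edges G \<Longrightarrow> le e \<in> edges A \<and> snd \<phi> (le e) = snd \<psi> (Inr e)"
    unfolding image_iff by metis
  define \<gamma> :: "('v + nat \<times> 'e, 'e + 'e, 'va, 'ea) qhom" where
    "\<gamma> = (case_sum lv (\<lambda>(i, e). if i = 0 then src A (le e) else tgt A (le e)),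
          case_sum (\<lambda>_. undefined) le)"
  have \<gamma>: "is_hom \<gamma> (explosion G) A"
    using lv le by (simp add: is_hom_explosion_iff[OF \<open>is_quiver A\<close>] \<gamma>_def)
  moreover have "hom_eq (explosion G) (hcomp \<phi> \<gamma>) \<psi>"
    unfolding hom_eq_explosion_iff[OF is_hom_hcomp[OF epic_imp_is_hom[OF \<phi>] \<gamma>] \<psi>]
    using lv le by (simp add: hcomp_def \<gamma>_def)
  ultimately show "\<exists>\<gamma>. is_hom \<gamma> (explosion G) A \<and> hom_eq (explosion G) (hcomp \<phi> \<gamma>) \<psi>"
    by blast
qed

lemma is_hom_cover_map:
  assumes "is_quiver G"
  shows "is_hom (cover_map G) (explosion G) G"
  using assms by (auto simp: is_hom_def cover_map_def explosion_simps indep_def is_quiver_def)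

lemma cover_map_Inl: "fst (cover_map G) (Inl v) = v"
  and cover_map_Inr: "snd (cover_map G) (Inr e) = e"
  by (simp_all add: cover_map_def)

lemma cover_map_fibre_indep:
  assumes "x \<in> verts (explosion G)" and "v \<in> indep G" and "fst (cover_map G) x = v"
  shows "x = Inl v"
  using assms by (auto simp: explosion_simps cover_map_def indep_def split: if_splits)

lemma epic_cover_map:
  assumes "is_quiver G"
  shows "epic (cover_map G) (explosion G) G"
proof (rule epic_if_hits_edges_and_indep[OF is_quiver_explosion is_hom_cover_map[OF assms]])
  show "edges G \<subseteq> snd (cover_map G) ` edges (explosion G)"
    by (force simp: edges_explosion cover_map_Inr)
  show "indep G \<subseteq> fst (cover_map G) ` verts (explosion G)"
    by (force simp: verts_explosion cover_map_Inl)
qed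

lemma epi_coessential_cover_map:
  assumes "is_quiver G" and "is_quiver A"
  shows "epi_coessential_wrt (cover_map G) (explosion G) G A"
  unfolding epi_coessential_wrt_def
proof (intro conjI allI impI)
  show "epic (cover_map G) (explosion G) G"
    using epic_cover_map[OF assms(1)] .
  fix \<alpha> assume "is_hom \<alpha> A (explosion G) \<and> epic (hcomp (cover_map G) \<alpha>) A G"
  then have \<alpha>: "is_hom \<alpha> A (explosion G)" and epic: "epic (hcomp (cover_map G) \<alpha>) A G"
    by simp_all
  show "epic \<alpha> A (explosion G)"
  proof (rule epic_if_hits_edges_and_indep[OF \<open>is_quiver A\<close> \<alpha>])
    show "edges (explosion G) \<subseteq> snd \<alpha> ` edges A"
    proof
      fix x assume "x \<in> edges (explosion G)"
      then obtain e where e: "e \<in> edges G" "x = Inr e"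
        by (auto simp: edges_explosion)
      then obtain a where a: "a \<in> edges A" "snd (cover_map G) (snd \<alpha> a) = e"
        using epic by (force simp: epic_def hcomp_def)
      moreover have "snd \<alpha> a \<in> Inr ` edges G"
        using \<alpha> a(1) by (auto simp: is_hom_def edges_explosion)
      ultimately show "x \<in> snd \<alpha> ` edges A"
        using e by (force simp: cover_map_Inr)
    qed
    show "indep (explosion G) \<subseteq> fst \<alpha> ` verts A"
    proof
      fix x assume "x \<in> indep (explosion G)"
      then obtain v where v: "v \<in> indep G" "x = Inl v"
        by (auto simp: indep_explosion)
      then obtain a where a: "a \<in> verts A" "fst (cover_map G) (fst \<alpha> a) = v"
        using epic by (force simp: epic_def hcomp_def indep_def)
      moreover have "fst \<alpha> a \<in> verts (explosion G)"
        using \<alpha> a(1) unfolding is_hom_def by blast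
      ultimately have "fst \<alpha> a = x"
        using cover_map_fibre_indep v by simp
      with a(1) show "x \<in> fst \<alpha> ` verts A"
        by blast
    qed
  qed
qed

theorem mainTheorem8:
  fixes G :: "('v, 'e) quiver"
  assumes "is_quiver G"
  shows "(\<forall>(A :: ('va, 'ea) quiver) (B :: ('vb, 'eb) quiver).
            is_quiver A \<and> is_quiver B \<longrightarrow> epi_projective_wrt (explosion G) A B)
       \<and> is_hom (cover_map G) (explosion G) G
       \<and> (\<forall>A :: ('vc, 'ec) quiver. is_quiver A \<longrightarrow> epi_coessential_wrt (cover_map G) (explosion G) G A)"
  using epi_projective_explosion is_hom_cover_map[OF assms] epi_coessential_cover_map[OF assms]
  by blast

end
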